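(* Let $m\ge0$, $r>0$ and $\gamma>0$. If $r\le\sqrt{2/(\gamma m)}$, then for all $0\le\tau<\pi mr/4$, all $d\ge0$ and all $\omega>0$, $$\mathrm{Re}\left((\pi+6j)\left(1+\frac{\gamma}{j\omega\big(mj\omega+d+\tfrac1r e^{-j\omega\tau}\big)}\right)\right)>0.$$
   Context: $j$ denotes the imaginary unit. *)

theory Defs
  imports Complex_Main
begin

end

theory Submission
  imports Defs "HOL-Analysis.Complex_Transcendental"
begin

text \<open>
  Put \<open>\<theta> = \<omega>\<tau>\<close> and \<open>x = m\<omega>r\<close>. The denominator equals \<open>(\<omega>/r) w\<close> with
  \<open>w = (sin \<theta> - x) + j (rd + cos \<theta>)\<close>, so the real part is
  \<open>\<pi> + \<kappa> Re((\<pi> + 6j) w\<^sup>*) / |w|\<^sup>2\<close> with \<open>\<kappa> = \<gamma>r/\<omega>\<close>, and the hypothesis on \<open>r\<close>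
  gives \<open>\<kappa>x \<le> 2\<close>. Hence it suffices that
  \<open>\<pi>x|w|\<^sup>2 + 2 Re((\<pi> + 6j) w\<^sup>*) > 0\<close> whenever \<open>0 \<le> \<theta> < \<pi>x/4\<close> and \<open>c \<ge> cos \<theta>\<close>,
  where \<open>c = Im w\<close>. For \<open>\<theta> \<le> \<pi>/2\<close> this form is smallest at \<open>c = cos \<theta>\<close>, where it
  equals \<open>\<pi>(x\<^sup>2 - 1)(x - 2 sin \<theta>) + 12 cos \<theta>\<close>; the only delicate range is \<open>1 < x < 2\<close>,
  where monotonicity in \<open>\<theta>\<close> reduces everything to the boundary \<open>\<theta> = \<pi>x/4\<close>, settled
  by quartic Taylor bounds. For \<open>\<theta> > \<pi>/2\<close> the constraint \<open>\<theta> < \<pi>x/4\<close> forces \<open>x\<close> to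
  be so large that the form is positive outright.
\<close>

lemma quartic_pos_near_pi:
  fixes P z :: real
  assumes P: "314/100 \<le> P" "P \<le> 315/100" and z: "0 < z" "z \<le> 79/100"
  shows "3*P^3 + 64*P - (18*P^2 + 64)*z + (16*P - P^3/4 - P^2/2)*z^2 + 4/3*P^2*z^3 - 4/3*P*z^4 > 0"
proof -
  have "P^2 \<le> (315/100)^2" "P^3 \<le> (315/100)^3" "(314/100)^3 \<le> P^3"
    using P by (auto intro!: power_mono)
  then have P2: "P^2 \<le> 993/100" and P3: "P^3 \<le> 3126/100" "3095/100 \<le> P^3"
    by (simp_all add: power2_eq_square power3_eq_cube)
  have "(18*P^2 + 64)*z \<le> (18*(993/100) + 64) * (79/100)"
    using P2 z by (intro mult_mono) auto
  then have "(18*P^2 + 64)*z \<le> 19177/100"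
    by simp
  moreover have "4/3*P*z^4 \<le> 4/3*(315/100) * 1"
    using P z by (intro mult_mono) (auto simp: power_le_one)
  then have "4/3*P*z^4 \<le> 42/10"
    by simp
  moreover have "0 \<le> (16*P - P^3/4 - P^2/2)*z^2"
    using P P2 P3 by simp
  moreover have "0 \<le> 4/3*P^2*z^3"
    using z by simp
  ultimately show ?thesis
    using P P3 by linarith
qed

lemma cos_le_Taylor_quartic:
  fixes z :: real
  shows "cos z \<le> 1 - z^2/2 + z^4/24"
proof -
  obtain t where "cos z = (\<Sum>m<4. cos_coeff m * z^m) + cos (t + 1/2 * real 4 * pi) / fact 4 * z^4"
    using Maclaurin_cos_expansion[of z 4] by blast
  then have "cos z = 1 - z^2/2 + cos t * z^4 / 24"
    by (simp add: lessThan_nat_numeral cos_coeff_def fact_numeral cos_add)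
  moreover have "cos t * z^4 \<le> 1 * z^4"
    by (rule mult_right_mono) auto
  ultimately show ?thesis
    by linarith
qed

lemma sin_ge_Taylor_quartic:
  fixes z :: real
  assumes "0 \<le> z"
  shows "z - z^3/6 - z^4/24 \<le> sin z"
proof -
  have "\<bar>sin z - (\<Sum>m<4. sin_coeff m * z^m)\<bar> \<le> inverse (fact 4) * \<bar>z\<bar>^4"
    by (rule Maclaurin_sin_bound)
  then have "\<bar>sin z - (z - z^3/6)\<bar> \<le> z^4/24"
    using assms by (simp add: lessThan_nat_numeral sin_coeff_def fact_numeral)
  then show ?thesis
    by linarith
qed

lemma cubic_sin_cos_pos_on_1_2:
  fixes x :: real
  assumes "1 < x" "x < 2"
  shows "pi * (x^2 - 1) * (x - 2 * sin (pi * x / 4)) + 12 * cos (pi * x / 4) > 0"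
proof -
  \<comment> \<open>\<open>z\<close> turns \<open>sin (\<pi>x/4), cos (\<pi>x/4)\<close> into \<open>cos z, sin z\<close>; after the Taylor
    bounds \<open>K, S\<close> the expression is \<open>z\<^sup>2/\<pi>\<^sup>2\<close> times the quartic above.\<close>
  define z where "z = pi/2 - pi * x / 4"
  define K where "K = 1 - z^2/2 + z^4/24"
  define S where "S = z - z^3/6 - z^4/24"
  have z: "0 < z" "z < pi/4"
    using assms by (simp_all add: z_def field_simps)
  have pi: "314/100 \<le> pi" "pi \<le> 315/100"
    using pi_approx by simp_all
  moreover have "z \<le> 79/100"
    using z pi by linarith
  ultimately have "0 < z^2 * (3*pi^3 + 64*pi - (18*pi^2 + 64)*z + (16*pi - pi^3/4 - pi^2/2)*z^2
                                + 4/3*pi^2*z^3 - 4/3*pi*z^4)"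
    using z quartic_pos_near_pi by simp
  also have "\<dots> = pi^2 * (pi * (x^2 - 1) * (x - 2 * K) + 12 * S)"
  proof -
    have "pi * x = 2 * pi - 4 * z"
      by (simp add: z_def)
    then show ?thesis
      unfolding K_def S_def by algebra
  qed
  finally have "0 < pi * (x^2 - 1) * (x - 2 * K) + 12 * S"
    by (simp add: zero_less_mult_iff)
  also have "\<dots> \<le> pi * (x^2 - 1) * (x - 2 * cos z) + 12 * sin z"
  proof -
    have "1 < x^2"
      using assms by (simp add: one_less_power)
    moreover have "cos z \<le> K" "S \<le> sin z"
      using cos_le_Taylor_quartic sin_ge_Taylor_quartic z by (simp_all add: K_def S_def)
    ultimately show ?thesis
      by (intro add_mono mult_left_mono) auto
  qed
  also have "\<dots> = pi * (x^2 - 1) * (x - 2 * sin (pi * x / 4)) + 12 * cos (pi * x / 4)"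
    by (simp add: z_def cos_diff sin_diff)
  finally show ?thesis .
qed

lemma cubic_sin_cos_pos:
  fixes x \<theta> :: real
  assumes x: "0 < x" and \<theta>: "0 \<le> \<theta>" "\<theta> \<le> pi/2" "\<theta> < pi * x / 4"
  shows "pi * (x^2 - 1) * (x - 2 * sin \<theta>) + 12 * cos \<theta> > 0"
proof -
  consider "x \<le> 1" | "1 < x" "x < 2" | "2 \<le> x"
    by linarith
  then show ?thesis
  proof cases
    case 1
    then have "pi * x \<le> pi * 1"
      by (intro mult_left_mono) auto
    then have "\<theta> < pi/4"
      using \<theta> by linarith
    then have "cos (pi/3) < cos \<theta>"
      using \<theta> by (intro cos_monotone_0_pi) auto
    then have "6 < 12 * cos \<theta>"
      by (simp add: cos_60)
    have "(1 - x^2) * (-1) \<le> (1 - x^2) * (2 * sin \<theta> - x)"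
      using 1 x \<theta> sin_ge_zero[of \<theta>] by (intro mult_left_mono) (auto simp: power_le_one)
    moreover have "-1 \<le> (1 - x^2) * (-1)"
      using x by simp
    ultimately have "-1 \<le> (1 - x^2) * (2 * sin \<theta> - x)"
      by linarith
    then have "pi * (-1) \<le> pi * ((1 - x^2) * (2 * sin \<theta> - x))"
      by (intro mult_left_mono) auto
    then have "- pi \<le> pi * (x^2 - 1) * (x - 2 * sin \<theta>)"
      by (simp add: algebra_simps)
    then show ?thesis
      using \<open>6 < 12 * cos \<theta>\<close> pi_less_4 by linarith
  next
    case 2
    have "0 < pi * (x^2 - 1) * (x - 2 * sin (pi * x / 4)) + 12 * cos (pi * x / 4)"
      using 2 by (rule cubic_sin_cos_pos_on_1_2)
    also have "\<dots> \<le> pi * (x^2 - 1) * (x - 2 * sin \<theta>) + 12 * cos \<theta>"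
    proof -
      have "pi * x / 4 \<le> pi/2"
        using 2 by simp
      then have "sin \<theta> \<le> sin (pi * x / 4)" "cos (pi * x / 4) \<le> cos \<theta>"
        using \<theta> by (auto intro!: sin_monotone_2pi_le cos_monotone_0_pi_le)
      moreover have "0 \<le> pi * (x^2 - 1)"
        using 2 by (simp add: one_le_power)
      ultimately show ?thesis
        by (intro add_mono mult_left_mono) auto
    qed
    finally show ?thesis .
  next
    case 3
    then have "1 < x^2"
      by (simp add: one_less_power)
    show ?thesis
    proof (cases "\<theta> = pi/2")
      case True
      then have "pi * 2 < pi * x"
        using \<theta> by linarith
      then have "0 < x - 2 * sin \<theta>"
        by (simp add: True)
      then have "0 < pi * (x^2 - 1) * (x - 2 * sin \<theta>)"
        using \<open>1 < x^2\<close> by simp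
      then show ?thesis
        by (simp add: True)
    next
      case False
      then have "0 < cos \<theta>"
        using \<theta> by (intro cos_gt_zero_pi) auto
      moreover have "0 \<le> x - 2 * sin \<theta>"
        using 3 sin_le_one[of \<theta>] by linarith
      then have "0 \<le> pi * (x^2 - 1) * (x - 2 * sin \<theta>)"
        using \<open>1 < x^2\<close> by simp
      ultimately show ?thesis
        by linarith
    qed
  qed
qed

lemma quadratic_form_pos:
  fixes x \<theta> c :: real
  assumes x: "0 < x" and \<theta>: "0 \<le> \<theta>" "\<theta> < pi * x / 4" and c: "cos \<theta> \<le> c"
  shows "pi * x * ((sin \<theta> - x)^2 + c^2) + 2 * (pi * (sin \<theta> - x) + 6 * c) > 0"
proof (cases "\<theta> \<le> pi/2")
  case True
  have "0 \<le> cos \<theta>"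
    using \<theta> True by (intro cos_ge_zero) auto
  then have "(cos \<theta>)^2 \<le> c^2"
    using c by (intro power_mono) auto
  then have "0 \<le> pi * x * (c^2 - (cos \<theta>)^2)"
    using x by simp
  then have "0 < pi * (x^2 - 1) * (x - 2 * sin \<theta>) + 12 * cos \<theta>
                 + pi * x * (c^2 - (cos \<theta>)^2) + 12 * (c - cos \<theta>)"
    using cubic_sin_cos_pos[OF x \<theta>(1) True \<theta>(2)] c
    by (intro add_pos_nonneg[OF add_pos_nonneg]) auto
  also have "\<dots> = pi * x * ((sin \<theta> - x)^2 + c^2) + 2 * (pi * (sin \<theta> - x) + 6 * c)"
    using sin_cos_squared_add[of \<theta>] by algebra
  finally show ?thesis .
next
  case False
  define \<phi> where "\<phi> = \<theta> - pi/2"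
  define u where "u = x - sin \<theta>"
  have "0 < \<phi>"
    using False by (simp add: \<phi>_def)
  have "c \<ge> - \<phi>"
    using c sin_x_le_x[of \<phi>] \<open>0 < \<phi>\<close> by (simp add: \<phi>_def cos_diff sin_diff)
  have "2 + 4 * \<phi> / pi < x"
    using \<theta>(2) by (simp add: \<phi>_def field_simps)
  then have "1 + 4 * \<phi> / pi < u"
    unfolding u_def using sin_le_one[of \<theta>] by linarith
  have "12 * \<phi> < pi * (u * (x * u - 2))"
  proof -
    define \<alpha> where "\<alpha> = 4 * \<phi> / pi"
    have "0 < \<alpha>"
      using \<open>0 < \<phi>\<close> by (simp add: \<alpha>_def)
    have "(2 + \<alpha>) * (1 + \<alpha>) < x * u"
      using \<open>2 + 4 * \<phi> / pi < x\<close> \<open>1 + 4 * \<phi> / pi < u\<close> \<open>0 < \<alpha>\<close>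
      by (intro mult_strict_mono) (auto simp: \<alpha>_def)
    moreover have "2 + 3 * \<alpha> \<le> (2 + \<alpha>) * (1 + \<alpha>)"
      using \<open>0 < \<alpha>\<close> by (simp add: algebra_simps)
    ultimately have "3 * \<alpha> < x * u - 2"
      by linarith
    also have "\<dots> < u * (x * u - 2)"
      using \<open>1 + 4 * \<phi> / pi < u\<close> \<open>0 < \<alpha>\<close> calculation
      by (simp add: \<alpha>_def)
    finally have "pi * (3 * \<alpha>) < pi * (u * (x * u - 2))"
      by simp
    then show ?thesis
      by (simp add: \<alpha>_def)
  qed
  moreover have "pi * x * ((sin \<theta> - x)^2 + c^2) + 2 * (pi * (sin \<theta> - x) + 6 * c)
      = pi * (u * (x * u - 2)) + pi * x * c^2 + 12 * c"
    by (simp add: u_def algebra_simps power2_eq_square)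
  moreover have "0 \<le> pi * x * c^2"
    using x by simp
  ultimately show ?thesis
    using \<open>c \<ge> - \<phi>\<close> by linarith
qed

lemma Re_mult_one_plus_divide:
  fixes p w :: complex and k :: real
  shows "Re (p * (1 + of_real k / w)) = Re p + k * Re (p * cnj w) / (cmod w)^2"
  by (simp add: Re_divide cmod_power2 algebra_simps add_divide_distrib diff_divide_distrib)

lemma Re_mult_one_plus_divide_pos:
  fixes p w :: complex and k x :: real
  assumes "0 < Re p" "0 \<le> k" "0 < x" "k * x \<le> 2"
    and pos: "0 < x * Re p * (cmod w)^2 + 2 * Re (p * cnj w)"
  shows "0 < Re (p * (1 + of_real k / w))"
proof -
  define N where "N = (cmod w)^2"
  define R where "R = Re (p * cnj w)"
  have "w \<noteq> 0"
    using pos by auto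
  then have "0 < N"
    by (simp add: N_def)
  have "0 < Re p * N + k * R"
  proof (cases "0 \<le> R")
    case True
    then show ?thesis
      using assms \<open>0 < N\<close> by (simp add: add_pos_nonneg)
  next
    case False
    then have "2 * R \<le> x * k * R"
      using assms by (simp add: mult_right_mono_neg mult.commute)
    then have "0 < x * (Re p * N + k * R)"
      using pos by (simp add: N_def R_def algebra_simps)
    then show ?thesis
      using \<open>0 < x\<close> by (simp add: zero_less_mult_iff)
  qed
  then show ?thesis
    unfolding Re_mult_one_plus_divide N_def[symmetric] R_def[symmetric]
    using \<open>0 < N\<close> by (simp add: field_simps)
qed

lemma delay_quotient_eq:
  fixes m d r \<gamma> \<omega> \<tau> :: real
  assumes "r \<noteq> 0"
  shows "of_real \<gamma> / (\<i> * of_real \<omega> * (of_real m * \<i> * of_real \<omega> + of_real d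
           + (1 / of_real r) * exp (- \<i> * of_real \<omega> * of_real \<tau>)))
    = of_real (\<gamma> * r / \<omega>) / Complex (sin (\<omega> * \<tau>) - m * \<omega> * r) (r * d + cos (\<omega> * \<tau>))"
proof -
  have "\<i> * of_real \<omega> * (of_real m * \<i> * of_real \<omega> + of_real d
           + (1 / of_real r) * exp (- \<i> * of_real \<omega> * of_real \<tau>))
    = of_real (\<omega> / r) * Complex (sin (\<omega> * \<tau>) - m * \<omega> * r) (r * d + cos (\<omega> * \<tau>))"
    using assms by (simp add: complex_eq_iff Re_exp Im_exp field_simps power2_eq_square)
  moreover have "complex_of_real \<gamma> / of_real (\<omega> / r) = of_real (\<gamma> * r / \<omega>)"
    by (simp flip: of_real_divide)
  ultimately show ?thesis
    by (simp only: divide_divide_eq_left[symmetric])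
qed

theorem lemma7:
  fixes m r \<gamma> :: real
  assumes "m \<ge> 0" and "r > 0" and "\<gamma> > 0"
    and "r \<le> sqrt (2 / (\<gamma> * m))"
  shows "\<forall>\<tau> d \<omega> :: real. 0 \<le> \<tau> \<longrightarrow> \<tau> < pi * m * r / 4 \<longrightarrow> d \<ge> 0 \<longrightarrow> \<omega> > 0 \<longrightarrow>
    Re ((complex_of_real pi + 6 * \<i>) *
        (1 + complex_of_real \<gamma> /
           (\<i> * complex_of_real \<omega> *
             (complex_of_real m * \<i> * complex_of_real \<omega> + complex_of_real d
               + (1 / complex_of_real r) * exp (- \<i> * complex_of_real \<omega> * complex_of_real \<tau>))))) > 0"
proof (intro allI impI)
  fix \<tau> d \<omega> :: real
  assume \<tau>: "0 \<le> \<tau>" "\<tau> < pi * m * r / 4" and "0 \<le> d" and "0 < \<omega>"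
  define x where "x = m * \<omega> * r"
  have "m \<noteq> 0"
    using assms(2,4) by auto
  then have "0 < x"
    using assms(1,2) \<open>0 < \<omega>\<close> by (simp add: x_def)
  have "r^2 \<le> (sqrt (2 / (\<gamma> * m)))^2"
    using assms(2,4) by (intro power_mono) auto
  then have "\<gamma> * r / \<omega> * x \<le> 2"
    using assms(1,3) \<open>m \<noteq> 0\<close> \<open>0 < \<omega>\<close> by (simp add: x_def field_simps power2_eq_square)
  moreover have "\<omega> * \<tau> < pi * x / 4"
    using \<tau>(2) \<open>0 < \<omega>\<close> by (simp add: x_def field_simps)
  then have "0 < pi * x * ((sin (\<omega> * \<tau>) - x)^2 + (r * d + cos (\<omega> * \<tau>))^2)
                 + 2 * (pi * (sin (\<omega> * \<tau>) - x) + 6 * (r * d + cos (\<omega> * \<tau>)))"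
    using \<open>0 < x\<close> \<tau>(1) \<open>0 < \<omega>\<close> assms(2) \<open>0 \<le> d\<close> by (intro quadratic_form_pos) auto
  ultimately show "Re ((complex_of_real pi + 6 * \<i>) *
        (1 + complex_of_real \<gamma> /
           (\<i> * complex_of_real \<omega> *
             (complex_of_real m * \<i> * complex_of_real \<omega> + complex_of_real d
               + (1 / complex_of_real r) * exp (- \<i> * complex_of_real \<omega> * complex_of_real \<tau>))))) > 0"
    unfolding delay_quotient_eq[OF less_imp_neq[OF assms(2), symmetric]] x_def[symmetric]
    using assms(2,3) \<open>0 < \<omega>\<close> \<open>0 < x\<close>
    by (intro Re_mult_one_plus_divide_pos) (auto simp: cmod_power2 algebra_simps)
qed
end
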